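(* Let $L$ be the unnormalized Laplacian of a simple undirected network with $M$ edges, with simple eigenvalues $\lambda_1,\dots,\lambda_N$ and orthonormal eigenvectors $\bm v^{(1)},\dots,\bm v^{(N)}$. Suppose the network is modified by adding (resp. removing) an unweighted edge $(p,q)$, encoded by the Laplacian perturbation matrix $\Delta L^{(pq)}$ with $\Delta L^{(pq)}_{pp}=\Delta L^{(pq)}_{qq}=\pm1$, $\Delta L^{(pq)}_{pq}=\Delta L^{(pq)}_{qp}=\mp1$, and all other entries $0$ (upper sign for addition, lower sign for removal). Let $L(\epsilon)=L+\epsilon\,\Delta L^{(pq)}$, assume its eigenvalues $\lambda_i(\epsilon)$ are simple, and let $h(\epsilon)=-\sum_i\frac{\lambda_i(\epsilon)}{2M}\log_2\frac{\lambda_i(\epsilon)}{2M}$. Then $h(\epsilon)=h(0)+\epsilon h'(0)+\mathcal{O}(\epsilon^2)$ with $$h'(0)=-\frac{1}{2M}\sum_{i=1}^N\pm\left(\bm v^{(i)}_p-\bm v^{(i)}_q\right)^2\left(\log_2\frac{\lambda_i}{2M}+\frac{1}{\ln 2}\right),$$ where $\pm$ is $+$ for addition and $-$ for removal.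
   Context: For a simple undirected unweighted network with adjacency matrix $A$ and degree matrix $D$, the unnormalized Laplacian is $L=D-A$. The von Neumann entropy of a network with $M$ edges and Laplacian eigenvalues $\lambda_i$ is $-\sum_i\frac{\lambda_i}{2M}\log_2\frac{\lambda_i}{2M}$ with $0\log_2 0=0$. *)

theory Defs
  imports "HOL-Analysis.Analysis" "HOL-Library.Landau_Symbols"
begin

definition simple_adjacency :: "real^'n^'n \<Rightarrow> bool" where
  "simple_adjacency A \<longleftrightarrow>
     (\<forall>i j. A$i$j = 0 \<or> A$i$j = 1) \<and> (\<forall>i j. A$i$j = A$j$i) \<and> (\<forall>i. A$i$i = 0)"

definition laplacian :: "real^'n^'n \<Rightarrow> real^'n^'n" where
  "laplacian A = (\<chi> i j. if i = j then (\<Sum>k\<in>UNIV. A$i$k) else 0) - A"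

definition num_edges :: "real^'n^'n \<Rightarrow> real" where
  "num_edges A = (\<Sum>i\<in>UNIV. \<Sum>j\<in>UNIV. A$i$j) / 2"

text \<open>Laplacian perturbation matrix for adding (s = 1) or removing (s = -1) edge (p,q).\<close>
definition edge_perturbation :: "'n \<Rightarrow> 'n \<Rightarrow> real \<Rightarrow> real^'n^'n" where
  "edge_perturbation p q s = (\<chi> i j.
     if (i = p \<and> j = p) \<or> (i = q \<and> j = q) then s
     else if (i = p \<and> j = q) \<or> (i = q \<and> j = p) then - s else 0)"

definition eigenvalues :: "real^'n^'n \<Rightarrow> real set" where
  "eigenvalues L = {c. \<exists>v. v \<noteq> 0 \<and> L *v v = c *\<^sub>R v}"

definition eigenspace :: "real^'n^'n \<Rightarrow> real \<Rightarrow> (real^'n) set" where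
  "eigenspace L c = {v. L *v v = c *\<^sub>R v}"

text \<open>Von Neumann entropy  - sum_i (lambda_i / 2M) log2 (lambda_i / 2M), eigenvalues counted with
  (geometric = algebraic, for symmetric L) multiplicity; 0 log 0 = 0 holds since the factor is 0.\<close>
definition vn_entropy :: "real \<Rightarrow> real^'n^'n \<Rightarrow> real" where
  "vn_entropy M L = - (\<Sum>c\<in>eigenvalues L.
      real (dim (eigenspace L c)) * ((c / (2 * M)) * log 2 (c / (2 * M))))"

end

theory Submission
  imports Defs
begin

text \<open>
  The perturbed Laplacian \<open>L + \<epsilon>B\<close> stays symmetric with simple spectrum, so its entropy is
  \<open>-\<Sum> f(\<mu>\<^sub>i)\<close> with \<open>f(x) = (x/2M) log\<^sub>2 (x/2M)\<close>, summed over its eigenvalues \<open>\<mu>\<^sub>i\<close>.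
  For each simple eigenpair \<open>(\<lambda>\<^sub>i, v\<^sub>i)\<close> of \<open>L\<close>, the vector \<open>v\<^sub>i + \<epsilon>y\<^sub>i\<close> with
  \<open>y\<^sub>i = \<Sum>\<^sub>j (Bv\<^sub>i\<bullet>v\<^sub>j)/(\<lambda>\<^sub>i - \<lambda>\<^sub>j) v\<^sub>j\<close> satisfies the eigenvalue equation for
  \<open>\<lambda>\<^sub>i + \<epsilon>(Bv\<^sub>i\<bullet>v\<^sub>i)\<close> up to a residual of order \<open>\<epsilon>\<^sup>2\<close>; expanding in an orthonormal
  eigenbasis of \<open>L + \<epsilon>B\<close> puts an eigenvalue that close to it, and the spectral gap of \<open>L\<close>
  makes this matching a bijection for small \<open>\<epsilon>\<close>. The all-ones vector lies in the kernel of both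
  \<open>L\<close> and \<open>B\<close>, so the zero eigenvalue stays exactly \<open>0\<close> and has \<open>Bv\<^sub>i\<bullet>v\<^sub>i = 0\<close>. At the
  nonzero eigenvalues a second-order Taylor bound for \<open>x log x\<close> turns
  \<open>\<mu>\<^sub>i = \<lambda>\<^sub>i + \<epsilon>(Bv\<^sub>i\<bullet>v\<^sub>i) + O(\<epsilon>\<^sup>2)\<close> into the expansion of the entropy, and
  \<open>Bv\<^sub>i\<bullet>v\<^sub>i = \<plusminus>(v\<^sub>i\<^sub>p - v\<^sub>i\<^sub>q)\<^sup>2\<close>.
\<close>

definition orthonormal_family :: "('n::finite \<Rightarrow> real^'n) \<Rightarrow> bool" where
  "orthonormal_family u \<longleftrightarrow> (\<forall>i j. u i \<bullet> u j = (if i = j then 1 else 0))"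

definition orthonormal_eigenbasis ::
    "real^'n^'n \<Rightarrow> ('n::finite \<Rightarrow> real^'n) \<Rightarrow> ('n \<Rightarrow> real) \<Rightarrow> bool" where
  "orthonormal_eigenbasis S u m \<longleftrightarrow> orthonormal_family u \<and> (\<forall>k. S *v u k = m k *\<^sub>R u k)"

lemma orthonormal_familyD:
  "orthonormal_family u \<Longrightarrow> u i \<bullet> u j = (if i = j then 1 else 0)"
  unfolding orthonormal_family_def by blast

lemma orthonormal_family_nonzero: "orthonormal_family u \<Longrightarrow> u k \<noteq> 0"
  using orthonormal_familyD[of u k k] by auto

lemma orthonormal_family_compose:
  "orthonormal_family u \<Longrightarrow> inj \<kappa> \<Longrightarrow> orthonormal_family (u \<circ> \<kappa>)"
  unfolding orthonormal_family_def by (auto dest: injD)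

lemma orthonormal_family_expansion:
  fixes u :: "'n::finite \<Rightarrow> real^'n"
  assumes "orthonormal_family u"
  shows "x = (\<Sum>k\<in>UNIV. (x \<bullet> u k) *\<^sub>R u k)"
proof -
  define U :: "real^'n^'n" where "U = (\<chi> k j. u k $ j)"
  have "U ** transpose U = mat 1"
    using assms by (simp add: orthonormal_family_def U_def matrix_matrix_mult_def transpose_def
        mat_def vec_eq_iff inner_vec_def)
  then have "transpose U ** U = mat 1"
    using matrix_left_right_inverse by blast
  then have columns: "(\<Sum>k\<in>UNIV. u k $ i * u k $ j) = (if i = j then 1 else 0)" for i j
    by (auto simp add: U_def matrix_matrix_mult_def transpose_def mat_def vec_eq_iff)
  have "(\<Sum>k\<in>UNIV. (x \<bullet> u k) *\<^sub>R u k) $ j = x $ j" for j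
  proof -
    have "(\<Sum>k\<in>UNIV. (x \<bullet> u k) *\<^sub>R u k) $ j = (\<Sum>k\<in>UNIV. \<Sum>i\<in>UNIV. x$i * (u k $ i * u k $ j))"
      by (simp add: inner_vec_def sum_distrib_right mult.assoc)
    also have "\<dots> = (\<Sum>i\<in>UNIV. x$i * (\<Sum>k\<in>UNIV. u k $ i * u k $ j))"
      by (subst sum.swap) (simp add: sum_distrib_left)
    finally show ?thesis
      by (simp add: columns if_distrib cong: if_cong)
  qed
  then show ?thesis
    by (simp add: vec_eq_iff)
qed

lemma orthonormal_family_norm_squared:
  assumes "orthonormal_family u"
  shows "(norm x)^2 = (\<Sum>k\<in>UNIV. (x \<bullet> u k)^2)"
proof -
  have "(norm x)^2 = x \<bullet> (\<Sum>k\<in>UNIV. (x \<bullet> u k) *\<^sub>R u k)"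
    by (simp flip: orthonormal_family_expansion[OF assms] add: power2_norm_eq_inner)
  then show ?thesis
    by (simp add: inner_sum_right power2_eq_square)
qed

lemma orthonormal_family_eq_0:
  assumes "orthonormal_family u" and "\<And>k. z \<bullet> u k = 0"
  shows "z = 0"
  using orthonormal_family_expansion[OF assms(1), of z] by (simp add: assms(2))

lemma eigenbasis_inner_mult:
  assumes "orthonormal_eigenbasis S u m"
  shows "(S *v x) \<bullet> u k = m k * (x \<bullet> u k)"
proof -
  have u: "orthonormal_family u" and eig: "\<And>j. S *v u j = m j *\<^sub>R u j"
    using assms by (auto simp: orthonormal_eigenbasis_def)
  have "S *v x = (\<Sum>j\<in>UNIV. (x \<bullet> u j * m j) *\<^sub>R u j)"
    by (subst orthonormal_family_expansion[OF u, of x])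
      (simp add: linear_sum linear_scale eig)
  then show ?thesis
    using u by (simp add: orthonormal_familyD inner_sum_left if_distrib cong: if_cong)
qed

lemma eigenbasis_eigenvector_parallel:
  assumes "orthonormal_eigenbasis S u m" and "inj m" and "S *v w = m i *\<^sub>R w"
  shows "w = (w \<bullet> u i) *\<^sub>R u i"
proof -
  have "w \<bullet> u k = 0" if "k \<noteq> i" for k
  proof -
    have "m i * (w \<bullet> u k) = m k * (w \<bullet> u k)"
      using eigenbasis_inner_mult[OF assms(1), of w k] assms(3) by simp
    moreover have "m i \<noteq> m k"
      using \<open>k \<noteq> i\<close> assms(2) by (auto dest: injD)
    ultimately show ?thesis
      by simp
  qed
  then have "(\<Sum>k\<in>UNIV. (w \<bullet> u k) *\<^sub>R u k) = (\<Sum>k\<in>UNIV. if k = i then (w \<bullet> u i) *\<^sub>R u i else 0)"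
    by (intro sum.cong) auto
  then have "(\<Sum>k\<in>UNIV. (w \<bullet> u k) *\<^sub>R u k) = (w \<bullet> u i) *\<^sub>R u i"
    by simp
  then show ?thesis
    using assms(1) orthonormal_family_expansion[of u w] by (simp add: orthonormal_eigenbasis_def)
qed

lemma eigenbasis_eigenvalues:
  assumes "orthonormal_eigenbasis S u m"
  shows "eigenvalues S = range m"
proof (intro equalityI subsetI)
  fix c assume "c \<in> eigenvalues S"
  then obtain x where "x \<noteq> 0" and x: "S *v x = c *\<^sub>R x"
    by (auto simp: eigenvalues_def)
  then obtain k where "x \<bullet> u k \<noteq> 0"
    using assms orthonormal_family_eq_0 unfolding orthonormal_eigenbasis_def by blast
  moreover have "c * (x \<bullet> u k) = m k * (x \<bullet> u k)"
    using eigenbasis_inner_mult[OF assms, of x k] x by simp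
  ultimately show "c \<in> range m"
    by simp
next
  fix c assume "c \<in> range m"
  then show "c \<in> eigenvalues S"
    using assms orthonormal_family_nonzero
    by (auto simp: eigenvalues_def orthonormal_eigenbasis_def)
qed

lemma eigenbasis_dim_eigenspace:
  assumes "orthonormal_eigenbasis S u m" and "inj m"
  shows "dim (eigenspace S (m k)) = 1"
proof -
  have u: "orthonormal_family u" and eig: "\<And>j. S *v u j = m j *\<^sub>R u j"
    using assms(1) by (auto simp: orthonormal_eigenbasis_def)
  have "eigenspace S (m k) = span {u k}"
  proof
    show "eigenspace S (m k) \<subseteq> span {u k}"
      using eigenbasis_eigenvector_parallel[OF assms]
      by (auto simp: eigenspace_def span_singleton)
    show "span {u k} \<subseteq> eigenspace S (m k)"
      by (auto simp: span_singleton eigenspace_def matrix_vector_mult_scaleR eig)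
  qed
  then show ?thesis
    using orthonormal_family_nonzero[OF u, of k] by (simp add: dim_insert)
qed

definition entropy_term :: "real \<Rightarrow> real \<Rightarrow> real" where
  "entropy_term N x = (x / N) * log 2 (x / N)"

lemma vn_entropy_eigenbasis:
  assumes "orthonormal_eigenbasis S u m" and "inj m"
  shows "vn_entropy M S = - (\<Sum>k\<in>UNIV. entropy_term (2 * M) (m k))"
  using assms
  by (simp add: vn_entropy_def eigenbasis_eigenvalues eigenbasis_dim_eigenspace sum.reindex
      entropy_term_def)

lemma symmetric_matrix_inner:
  fixes S :: "real^'n::finite^'n"
  assumes "transpose S = S"
  shows "(S *v x) \<bullet> y = x \<bullet> (S *v y)"
  by (metis assms dot_lmul_matrix transpose_matrix_vector)

lemma symmetric_simple_spectrum_eigenbasis: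
  fixes S :: "real^'n::finite^'n"
  assumes sym: "transpose S = S" and card: "card (eigenvalues S) = CARD('n)"
  obtains u m where "orthonormal_eigenbasis S u m" and "inj m"
proof -
  have "finite (eigenvalues S)"
    using card card.infinite by fastforce
  then obtain m where m: "bij_betw m (UNIV::'n set) (eigenvalues S)"
    using finite_same_card_bij card by (metis finite)
  then have "\<forall>k. \<exists>w. w \<noteq> 0 \<and> S *v w = m k *\<^sub>R w"
    by (auto simp: eigenvalues_def bij_betw_def)
  then obtain w where w: "\<And>k. w k \<noteq> 0" "\<And>k. S *v w k = m k *\<^sub>R w k"
    by metis
  define u where "u k = (1 / norm (w k)) *\<^sub>R w k" for k
  have eig: "S *v u k = m k *\<^sub>R u k" for k
    by (simp add: u_def matrix_vector_mult_scaleR w(2))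
  have "inj m"
    using m bij_betw_imp_inj_on by blast
  have "u i \<bullet> u j = (if i = j then 1 else 0)" for i j
  proof (cases "i = j")
    case True
    then show ?thesis
      using w(1) by (simp add: u_def dot_square_norm power2_eq_square)
  next
    case False
    then have "m i \<noteq> m j"
      using \<open>inj m\<close> by (auto dest: injD)
    moreover have "m i * (u i \<bullet> u j) = m j * (u i \<bullet> u j)"
      using symmetric_matrix_inner[OF sym, of "u i" "u j"] eig by simp
    ultimately show ?thesis
      using False by simp
  qed
  then show ?thesis
    using that \<open>inj m\<close> eig by (auto simp: orthonormal_eigenbasis_def orthonormal_family_def)
qed

lemma eigenbasis_approximate_eigenvalue:
  assumes "orthonormal_eigenbasis S u m"
  obtains k where "\<bar>m k - t\<bar> * norm x \<le> norm (S *v x - t *\<^sub>R x)"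
proof -
  have u: "orthonormal_family u"
    using assms by (simp add: orthonormal_eigenbasis_def)
  have "Min (range (\<lambda>j. \<bar>m j - t\<bar>)) \<in> range (\<lambda>j. \<bar>m j - t\<bar>)"
    by (rule Min_in) simp_all
  then obtain k where "Min (range (\<lambda>j. \<bar>m j - t\<bar>)) = \<bar>m k - t\<bar>"
    by (rule rangeE)
  moreover have "Min (range (\<lambda>j. \<bar>m j - t\<bar>)) \<le> \<bar>m j - t\<bar>" for j
    by (rule Min_le) simp_all
  ultimately have k: "(m k - t)^2 \<le> (m j - t)^2" for j
    by (metis abs_le_square_iff)
  have residual: "(S *v x - t *\<^sub>R x) \<bullet> u j = (m j - t) * (x \<bullet> u j)" for j
    by (simp add: inner_diff_left eigenbasis_inner_mult[OF assms] left_diff_distrib)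
  have "(\<bar>m k - t\<bar> * norm x)^2 = (\<Sum>j\<in>UNIV. (m k - t)^2 * (x \<bullet> u j)^2)"
    by (simp add: power_mult_distrib orthonormal_family_norm_squared[OF u] sum_distrib_left)
  also have "\<dots> \<le> (\<Sum>j\<in>UNIV. (m j - t)^2 * (x \<bullet> u j)^2)"
    by (intro sum_mono mult_right_mono k) simp
  also have "\<dots> = (norm (S *v x - t *\<^sub>R x))^2"
    by (simp add: orthonormal_family_norm_squared[OF u] residual power_mult_distrib)
  finally have "\<bar>m k - t\<bar> * norm x \<le> norm (S *v x - t *\<^sub>R x)"
    by (rule power2_le_imp_le) simp
  then show ?thesis
    by (rule that)
qed

lemma second_order_approximate_eigenvector:
  fixes L B :: "real^'n::finite^'n" and i :: 'n
  assumes L: "orthonormal_eigenbasis L v lam" and "inj lam"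
  defines "b \<equiv> (B *v v i) \<bullet> v i"
  obtains y where "y \<bullet> v i = 0"
    and "\<And>e. (L + e *\<^sub>R B) *v (v i + e *\<^sub>R y) - (lam i + e * b) *\<^sub>R (v i + e *\<^sub>R y)
               = e^2 *\<^sub>R (B *v y - b *\<^sub>R y)"
proof -
  have v: "orthonormal_family v" and eig: "\<And>k. L *v v k = lam k *\<^sub>R v k"
    using L by (auto simp: orthonormal_eigenbasis_def)
  \<comment> \<open>The coefficient at \<open>j = i\<close> is \<open>b / 0 = 0\<close>.\<close>
  define y where "y = (\<Sum>j\<in>UNIV. (((B *v v i) \<bullet> v j) / (lam i - lam j)) *\<^sub>R v j)"
  have yv: "y \<bullet> v k = ((B *v v i) \<bullet> v k) / (lam i - lam k)" for k
    by (simp add: y_def inner_sum_left orthonormal_familyD[OF v] if_distrib cong: if_cong)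
  have Ly: "L *v y = lam i *\<^sub>R y - B *v v i + b *\<^sub>R v i"
  proof -
    have "(L *v y - lam i *\<^sub>R y + B *v v i - b *\<^sub>R v i) \<bullet> v k = 0" for k
    proof (cases "k = i")
      case False
      then have "lam i - lam k \<noteq> 0"
        using \<open>inj lam\<close> by (auto dest: injD)
      then have "(y \<bullet> v k) * (lam i - lam k) = (B *v v i) \<bullet> v k"
        by (simp add: yv)
      then have "lam k * (y \<bullet> v k) - lam i * (y \<bullet> v k) = - ((B *v v i) \<bullet> v k)"
        by (simp add: algebra_simps)
      with False show ?thesis
        unfolding inner_diff_left inner_add_left
        by (simp add: eigenbasis_inner_mult[OF L] orthonormal_familyD[OF v])
    qed (simp add: inner_diff_left inner_add_left eigenbasis_inner_mult[OF L] yv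
        orthonormal_familyD[OF v] b_def)
    then have "L *v y - lam i *\<^sub>R y + B *v v i - b *\<^sub>R v i = 0"
      by (rule orthonormal_family_eq_0[OF v])
    then show ?thesis
      by (simp add: algebra_simps eq_diff_eq)
  qed
  show ?thesis
  proof
    show "y \<bullet> v i = 0"
      by (simp add: yv)
    fix e
    show "(L + e *\<^sub>R B) *v (v i + e *\<^sub>R y) - (lam i + e * b) *\<^sub>R (v i + e *\<^sub>R y)
        = e^2 *\<^sub>R (B *v y - b *\<^sub>R y)"
      by (simp add: matrix_vector_mult_add_rdistrib matrix_vector_right_distrib
          matrix_vector_mult_scaleR scaleR_matrix_vector_assoc[symmetric] eig Ly
          algebra_simps power2_eq_square)
  qed
qed

lemma perturbed_eigenvalues_near:
  fixes L B :: "real^'n::finite^'n"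
  assumes L: "orthonormal_eigenbasis L v lam" and "inj lam"
  obtains C where "\<And>e u m i. orthonormal_eigenbasis (L + e *\<^sub>R B) u m \<Longrightarrow>
           \<exists>k. \<bar>m k - (lam i + e * ((B *v v i) \<bullet> v i))\<bar> \<le> C * e^2"
proof -
  have v: "orthonormal_family v"
    using L by (simp add: orthonormal_eigenbasis_def)
  have "\<exists>z. z \<bullet> v i = 0 \<and> (\<forall>e. (L + e *\<^sub>R B) *v (v i + e *\<^sub>R z)
          - (lam i + e * ((B *v v i) \<bullet> v i)) *\<^sub>R (v i + e *\<^sub>R z)
        = e^2 *\<^sub>R (B *v z - ((B *v v i) \<bullet> v i) *\<^sub>R z))" for i
    using second_order_approximate_eigenvector[OF assms, where B = B and i = i] by metis
  then obtain y where y: "\<And>i. y i \<bullet> v i = 0"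
    "\<And>i e. (L + e *\<^sub>R B) *v (v i + e *\<^sub>R y i) - (lam i + e * ((B *v v i) \<bullet> v i)) *\<^sub>R (v i + e *\<^sub>R y i)
        = e^2 *\<^sub>R (B *v y i - ((B *v v i) \<bullet> v i) *\<^sub>R y i)"
    by metis
  define C where "C = (\<Sum>i\<in>UNIV. norm (B *v y i - ((B *v v i) \<bullet> v i) *\<^sub>R y i))"
  have "\<exists>k. \<bar>m k - (lam i + e * ((B *v v i) \<bullet> v i))\<bar> \<le> C * e^2"
    if S: "orthonormal_eigenbasis (L + e *\<^sub>R B) u m" for e u m i
  proof -
    define t where "t = lam i + e * ((B *v v i) \<bullet> v i)"
    define x where "x = v i + e *\<^sub>R y i"
    \<comment> \<open>\<open>x\<close> has component \<open>1\<close> along the unit vector \<open>v i\<close>.\<close>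
    have "1 \<le> norm x"
      using Cauchy_Schwarz_ineq2[of x "v i"] y(1)[of i] orthonormal_familyD[OF v, of i i]
      by (simp add: x_def inner_add_left norm_eq_sqrt_inner)
    obtain k where "\<bar>m k - t\<bar> * norm x \<le> norm ((L + e *\<^sub>R B) *v x - t *\<^sub>R x)"
      using eigenbasis_approximate_eigenvalue[OF S] by blast
    also have "\<dots> \<le> C * e^2"
      unfolding x_def t_def y(2) C_def
      by (simp add: mult.commute) (intro mult_left_mono member_le_sum; simp)
    finally have "\<bar>m k - t\<bar> * norm x \<le> C * e^2" .
    moreover have "\<bar>m k - t\<bar> \<le> \<bar>m k - t\<bar> * norm x"
      using \<open>1 \<le> norm x\<close> by (simp add: mult_le_cancel_left1)
    ultimately show ?thesis
      unfolding t_def by (meson order_trans)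
  qed
  then show ?thesis
    by (rule that)
qed

lemma inj_separated:
  fixes lam :: "'n::finite \<Rightarrow> real"
  assumes "inj lam"
  obtains \<delta> where "\<delta> > 0" and "\<And>i j. i \<noteq> j \<Longrightarrow> \<delta> \<le> \<bar>lam i - lam j\<bar>"
proof
  define G where "G = insert 1 ((\<lambda>(i, j). \<bar>lam i - lam j\<bar>) ` {(i, j). i \<noteq> j})"
  have "finite G"
    unfolding G_def by simp
  moreover have "g > 0" if "g \<in> G" for g
    using that assms by (auto simp: G_def dest: injD)
  ultimately show "Min G > 0"
    by (simp add: G_def)
  show "Min G \<le> \<bar>lam i - lam j\<bar>" if "i \<noteq> j" for i j
    using \<open>finite G\<close> that by (intro Min_le) (auto simp: G_def)
qed

lemma separated_perturbation_inj:
  fixes lam \<mu> :: "'n \<Rightarrow> real"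
  assumes gap: "\<And>i j. i \<noteq> j \<Longrightarrow> \<delta> \<le> \<bar>lam i - lam j\<bar>" and close: "\<And>i. \<bar>\<mu> i - lam i\<bar> < \<delta> / 2"
  shows "inj \<mu>"
proof (rule injI, rule ccontr)
  fix i j assume "\<mu> i = \<mu> j" "i \<noteq> j"
  then show False
    using gap[of i j] close[of i] close[of j] by linarith
qed

lemma separated_perturbation_eq:
  fixes lam \<mu> :: "'n \<Rightarrow> real"
  assumes gap: "\<And>i j. i \<noteq> j \<Longrightarrow> \<delta> \<le> \<bar>lam i - lam j\<bar>" and close: "\<And>i. \<bar>\<mu> i - lam i\<bar> < \<delta> / 2"
    and "\<mu> j = lam i"
  shows "j = i"
proof (rule ccontr)
  assume "j \<noteq> i"
  then have "\<delta> \<le> \<bar>lam i - lam j\<bar>"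
    by (intro gap) simp
  then show False
    using close[of j] assms(3) by linarith
qed

lemma eigenbasis_reindex_matching:
  fixes S :: "real^'n::finite^'n" and lam :: "'n \<Rightarrow> real"
  assumes S: "orthonormal_eigenbasis S u m"
    and gap: "\<And>i j. i \<noteq> j \<Longrightarrow> \<delta> \<le> \<bar>lam i - lam j\<bar>"
    and close: "\<And>i. \<bar>m (\<kappa> i) - lam i\<bar> < \<delta> / 2"
  shows "orthonormal_eigenbasis S (u \<circ> \<kappa>) (m \<circ> \<kappa>)" and "inj (m \<circ> \<kappa>)"
    and "lam i \<in> eigenvalues S \<Longrightarrow> m (\<kappa> i) = lam i"
proof -
  have close': "\<bar>(m \<circ> \<kappa>) i - lam i\<bar> < \<delta> / 2" for i
    using close by simp
  show "inj (m \<circ> \<kappa>)"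
    by (rule separated_perturbation_inj[OF gap close'])
  then have "inj \<kappa>"
    by (rule inj_on_imageI2)
  then show S\<kappa>: "orthonormal_eigenbasis S (u \<circ> \<kappa>) (m \<circ> \<kappa>)"
    using S orthonormal_family_compose[of u \<kappa>] by (simp add: orthonormal_eigenbasis_def)
  assume "lam i \<in> eigenvalues S"
  then obtain j where j: "lam i = (m \<circ> \<kappa>) j"
    unfolding eigenbasis_eigenvalues[OF S\<kappa>] by (rule rangeE)
  have "j = i"
    by (rule separated_perturbation_eq[OF gap close' j[symmetric]])
  with j have "(m \<circ> \<kappa>) i = lam i"
    by simp
  then show "m (\<kappa> i) = lam i"
    by simp
qed

lemma symmetric_matrix_add_scaleR:
  fixes L B :: "real^'n::finite^'n"
  assumes "transpose L = L" and "transpose B = B"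
  shows "transpose (L + e *\<^sub>R B) = L + e *\<^sub>R B"
  using assms by (simp add: transpose_def vec_eq_iff)

lemma perturbed_simple_spectrum:
  fixes L B :: "real^'n::finite^'n"
  assumes L: "orthonormal_eigenbasis L v lam" and "inj lam"
    and "transpose L = L" and "transpose B = B"
  obtains C where "\<forall>\<^sub>F e in nhds 0. card (eigenvalues (L + e *\<^sub>R B)) = CARD('n) \<longrightarrow>
      (\<exists>u \<mu>. orthonormal_eigenbasis (L + e *\<^sub>R B) u \<mu> \<and> inj \<mu>
         \<and> (\<forall>i. \<bar>\<mu> i - (lam i + e * ((B *v v i) \<bullet> v i))\<bar> \<le> C * e^2)
         \<and> (\<forall>i. lam i \<in> eigenvalues (L + e *\<^sub>R B) \<longrightarrow> \<mu> i = lam i))"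
proof -
  define b where "b i = (B *v v i) \<bullet> v i" for i
  obtain C where near: "\<And>e u m i. orthonormal_eigenbasis (L + e *\<^sub>R B) u m \<Longrightarrow>
      \<exists>k. \<bar>m k - (lam i + e * b i)\<bar> \<le> C * e^2"
    using perturbed_eigenvalues_near[where B = B, OF L \<open>inj lam\<close>] unfolding b_def by blast
  obtain \<delta> where "\<delta> > 0" and gap: "\<And>i j. i \<noteq> j \<Longrightarrow> \<delta> \<le> \<bar>lam i - lam j\<bar>"
    using inj_separated[OF \<open>inj lam\<close>] by blast
  have "\<forall>\<^sub>F e in nhds 0. \<forall>i. \<bar>e * b i\<bar> + C * e^2 < \<delta> / 2"
  proof (rule eventually_all_finite)
    fix i
    have "((\<lambda>e. \<bar>e * b i\<bar> + C * e^2) \<longlongrightarrow> \<bar>0 * b i\<bar> + C * 0^2) (nhds 0)"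
      by (intro tendsto_intros filterlim_ident)
    then show "\<forall>\<^sub>F e in nhds 0. \<bar>e * b i\<bar> + C * e^2 < \<delta> / 2"
      using \<open>\<delta> > 0\<close> by (intro order_tendstoD) auto
  qed
  then have "\<forall>\<^sub>F e in nhds 0. card (eigenvalues (L + e *\<^sub>R B)) = CARD('n) \<longrightarrow>
      (\<exists>u \<mu>. orthonormal_eigenbasis (L + e *\<^sub>R B) u \<mu> \<and> inj \<mu>
         \<and> (\<forall>i. \<bar>\<mu> i - (lam i + e * b i)\<bar> \<le> C * e^2)
         \<and> (\<forall>i. lam i \<in> eigenvalues (L + e *\<^sub>R B) \<longrightarrow> \<mu> i = lam i))"
  proof (rule eventually_mono, intro impI)
    fix e assume small: "\<forall>i. \<bar>e * b i\<bar> + C * e^2 < \<delta> / 2"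
      and "card (eigenvalues (L + e *\<^sub>R B)) = CARD('n)"
    then obtain u m where S: "orthonormal_eigenbasis (L + e *\<^sub>R B) u m"
      using symmetric_simple_spectrum_eigenbasis[OF symmetric_matrix_add_scaleR[OF assms(3,4)]]
      by blast
    have "\<forall>i. \<exists>k. \<bar>m k - (lam i + e * b i)\<bar> \<le> C * e^2"
      using near[OF S] by blast
    then have "\<exists>\<kappa>. \<forall>i. \<bar>m (\<kappa> i) - (lam i + e * b i)\<bar> \<le> C * e^2"
      by (rule choice)
    then obtain \<kappa> where \<kappa>: "\<And>i. \<bar>m (\<kappa> i) - (lam i + e * b i)\<bar> \<le> C * e^2"
      by blast
    have "\<bar>m (\<kappa> i) - lam i\<bar> < \<delta> / 2" for i
    proof -
      have "\<bar>m (\<kappa> i) - lam i\<bar> \<le> \<bar>m (\<kappa> i) - (lam i + e * b i)\<bar> + \<bar>e * b i\<bar>"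
        using abs_triangle_ineq[of "m (\<kappa> i) - (lam i + e * b i)" "e * b i"] by simp
      then show ?thesis
        using \<kappa>[of i] spec[OF small, of i] by linarith
    qed
    from eigenbasis_reindex_matching[where lam = lam, OF S gap this] \<kappa> show "\<exists>u \<mu>. orthonormal_eigenbasis (L + e *\<^sub>R B) u \<mu> \<and> inj \<mu>
         \<and> (\<forall>i. \<bar>\<mu> i - (lam i + e * b i)\<bar> \<le> C * e^2)
         \<and> (\<forall>i. lam i \<in> eigenvalues (L + e *\<^sub>R B) \<longrightarrow> \<mu> i = lam i)"
      by (intro exI[of _ "u \<circ> \<kappa>"] exI[of _ "m \<circ> \<kappa>"]) simp
  qed
  from this[unfolded b_def] show ?thesis
    by (rule that)
qed

lemma laplacian_symmetric:
  "simple_adjacency A \<Longrightarrow> transpose (laplacian A) = laplacian A"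
  by (simp add: simple_adjacency_def laplacian_def vec_eq_iff transpose_def)

lemma laplacian_mult_ones: "laplacian A *v (\<chi> i. 1) = (0::real^'n::finite)"
  by (simp add: laplacian_def vec_eq_iff matrix_vector_mult_def sum_subtractf)

lemma edge_perturbation_mult:
  fixes x :: "real^'n::finite"
  assumes "p \<noteq> q"
  defines "w \<equiv> axis p 1 - axis q 1 :: real^'n"
  shows "edge_perturbation p q s *v x = (s * (x $ p - x $ q)) *\<^sub>R w"
proof -
  have "edge_perturbation p q s $ i $ j = s * w $ i * w $ j" for i j
    using assms by (auto simp: edge_perturbation_def w_def axis_def)
  moreover have "(\<Sum>j\<in>UNIV. w $ j * x $ j) = w \<bullet> x"
    by (simp add: inner_vec_def)
  moreover have "w \<bullet> x = x $ p - x $ q"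
    by (simp add: w_def inner_diff_left inner_axis')
  ultimately show ?thesis
    by (simp add: vec_eq_iff matrix_vector_mult_def mult.assoc flip: sum_distrib_left)
qed

lemma edge_perturbation_symmetric: "transpose (edge_perturbation p q s) = edge_perturbation p q s"
  unfolding edge_perturbation_def transpose_def by (simp add: vec_eq_iff conj_commute disj_commute)

lemma edge_perturbation_inner:
  fixes x :: "real^'n::finite"
  assumes "p \<noteq> q"
  shows "(edge_perturbation p q s *v x) \<bullet> x = s * (x $ p - x $ q)^2"
  by (simp add: edge_perturbation_mult[OF assms] inner_diff_left inner_axis' power2_eq_square)

lemma edge_perturbation_mult_ones:
  "p \<noteq> q \<Longrightarrow> edge_perturbation p q s *v (\<chi> i. 1) = (0::real^'n::finite)"
  by (simp add: edge_perturbation_mult)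

definition entropy_term_deriv :: "real \<Rightarrow> real \<Rightarrow> real" where
  "entropy_term_deriv N x = (log 2 (x / N) + 1 / ln 2) / N"

lemma mult_ln_bounds:
  fixes r :: real
  assumes "r > 0"
  shows "0 \<le> r * ln r - r + 1" and "r * ln r - r + 1 \<le> (r - 1)^2"
proof -
  have "- ln r \<le> 1 / r - 1"
    using ln_le_minus_one[of "1 / r"] assms by (simp add: ln_div)
  then have "r * (- ln r) \<le> r * (1 / r - 1)"
    using assms by (intro mult_left_mono) auto
  then show "0 \<le> r * ln r - r + 1"
    using assms by (simp add: algebra_simps)
  have "r * ln r \<le> r * (r - 1)"
    using assms ln_le_minus_one[of r] by (intro mult_left_mono) auto
  then show "r * ln r - r + 1 \<le> (r - 1)^2"
    by (simp add: power2_eq_square algebra_simps)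
qed

lemma entropy_term_taylor:
  fixes N lam x :: real
  assumes "lam \<noteq> 0" and "\<bar>x - lam\<bar> < \<bar>lam\<bar>"
  shows "\<bar>entropy_term N x - entropy_term N lam - entropy_term_deriv N lam * (x - lam)\<bar>
      \<le> (x - lam)^2 / (\<bar>N\<bar> * ln 2 * \<bar>lam\<bar>)"
proof (cases "N = 0")
  case True
  then show ?thesis
    by (simp add: entropy_term_def entropy_term_deriv_def)
next
  case False
  \<comment> \<open>\<open>x\<close> lies strictly on the same side of \<open>0\<close> as \<open>lam\<close>, so \<open>r = x / lam\<close> is positive.\<close>
  define r where "r = x / lam"
  have "r > 0"
    using assms unfolding r_def
    by (cases "lam > 0") (auto simp: abs_if split: if_splits intro: divide_pos_pos divide_neg_neg)
  have x: "x = r * lam"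
    using assms(1) by (simp add: r_def)
  have "ln (x / N) = ln r + ln (lam / N)"
    using \<open>r > 0\<close> assms(1) False ln_mult[of r "lam / N"] by (simp add: x)
  then have "entropy_term N x - entropy_term N lam - entropy_term_deriv N lam * (x - lam)
      = lam / (N * ln 2) * (r * ln r - r + 1)"
    using False assms(1)
    by (simp add: entropy_term_def entropy_term_deriv_def log_def x field_simps)
  then have "\<bar>entropy_term N x - entropy_term N lam - entropy_term_deriv N lam * (x - lam)\<bar>
      = \<bar>lam\<bar> / (\<bar>N\<bar> * ln 2) * (r * ln r - r + 1)"
    using mult_ln_bounds(1)[OF \<open>r > 0\<close>] by (simp add: abs_mult abs_divide)
  also have "\<dots> \<le> \<bar>lam\<bar> / (\<bar>N\<bar> * ln 2) * (r - 1)^2"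
    using mult_ln_bounds(2)[OF \<open>r > 0\<close>] by (intro mult_left_mono) auto
  also have "\<dots> = (x - lam)^2 / (\<bar>N\<bar> * ln 2 * \<bar>lam\<bar>)"
  proof -
    have "(r - 1)^2 = (x - lam)^2 / (\<bar>lam\<bar> * \<bar>lam\<bar>)"
      using assms(1) by (simp add: r_def power2_eq_square field_simps)
    then show ?thesis
      using assms(1) by (simp add: divide_simps mult_ac del: abs_mult_self_eq)
  qed
  finally show ?thesis .
qed

lemma entropy_term_perturbation_bound:
  fixes N lam b C e x :: real
  assumes "lam \<noteq> 0" and e: "\<bar>e\<bar> < 1" and small: "\<bar>b\<bar> * \<bar>e\<bar> + \<bar>C\<bar> * e^2 < \<bar>lam\<bar>"
    and x: "\<bar>x - (lam + e * b)\<bar> \<le> C * e^2"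
  defines "d \<equiv> entropy_term_deriv N lam"
  shows "\<bar>entropy_term N x - entropy_term N lam - e * b * d\<bar>
      \<le> ((\<bar>b\<bar> + \<bar>C\<bar>)^2 / (\<bar>N\<bar> * ln 2 * \<bar>lam\<bar>) + \<bar>d\<bar> * \<bar>C\<bar>) * e^2"
proof -
  define c where "c = 1 / (\<bar>N\<bar> * ln 2 * \<bar>lam\<bar>)"
  define a where "a = \<bar>b\<bar> + \<bar>C\<bar>"
  have "C * e^2 \<le> \<bar>C\<bar> * e^2"
    by (intro mult_right_mono) auto
  with x have rem: "\<bar>x - (lam + e * b)\<bar> \<le> \<bar>C\<bar> * e^2"
    by linarith
  have "\<bar>e\<bar> * \<bar>e\<bar> \<le> 1 * \<bar>e\<bar>"
    using e by (intro mult_right_mono) auto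
  then have "\<bar>C\<bar> * e^2 \<le> \<bar>C\<bar> * \<bar>e\<bar>"
    by (intro mult_left_mono) (auto simp: power2_eq_square)
  moreover have tri: "\<bar>x - lam\<bar> \<le> \<bar>x - (lam + e * b)\<bar> + \<bar>b\<bar> * \<bar>e\<bar>"
    using abs_triangle_ineq[of "x - (lam + e * b)" "e * b"] by (simp add: abs_mult mult.commute)
  ultimately have "\<bar>x - lam\<bar> \<le> a * \<bar>e\<bar>"
    using rem unfolding a_def distrib_right by linarith
  then have "\<bar>x - lam\<bar>^2 \<le> (a * \<bar>e\<bar>)^2"
    by (intro power_mono) auto
  then have sq: "(x - lam)^2 \<le> a^2 * e^2"
    by (simp add: power_mult_distrib)
  have "\<bar>x - lam\<bar> < \<bar>lam\<bar>"
    using rem small tri by linarith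
  then have taylor: "\<bar>entropy_term N x - entropy_term N lam - d * (x - lam)\<bar> \<le> c * (x - lam)^2"
    using entropy_term_taylor[OF \<open>lam \<noteq> 0\<close>] by (simp add: c_def d_def)
  have "entropy_term N x - entropy_term N lam - e * b * d
      = (entropy_term N x - entropy_term N lam - d * (x - lam)) + d * (x - (lam + e * b))"
    by (simp add: algebra_simps)
  then have "\<bar>entropy_term N x - entropy_term N lam - e * b * d\<bar>
      \<le> \<bar>entropy_term N x - entropy_term N lam - d * (x - lam)\<bar> + \<bar>d\<bar> * \<bar>x - (lam + e * b)\<bar>"
    by (metis abs_mult abs_triangle_ineq)
  also have "\<dots> \<le> c * (a^2 * e^2) + \<bar>d\<bar> * (\<bar>C\<bar> * e^2)"
  proof (rule add_mono)
    have "c \<ge> 0"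
      by (simp add: c_def)
    then show "\<bar>entropy_term N x - entropy_term N lam - d * (x - lam)\<bar> \<le> c * (a^2 * e^2)"
      using taylor mult_left_mono[OF sq] by (meson order_trans)
    show "\<bar>d\<bar> * \<bar>x - (lam + e * b)\<bar> \<le> \<bar>d\<bar> * (\<bar>C\<bar> * e^2)"
      using rem by (rule mult_left_mono) simp
  qed
  finally show ?thesis
    by (simp add: c_def a_def algebra_simps)
qed

lemma entropy_term_perturbation:
  fixes N lam b C :: real
  assumes "lam = 0 \<Longrightarrow> b = 0"
  obtains K where "\<forall>\<^sub>F e in nhds 0. \<forall>x. \<bar>x - (lam + e * b)\<bar> \<le> C * e^2 \<and> (lam = 0 \<longrightarrow> x = 0) \<longrightarrow>
      \<bar>entropy_term N x - entropy_term N lam - e * b * entropy_term_deriv N lam\<bar> \<le> K * e^2"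
proof (cases "lam = 0")
  case True
  then show ?thesis
    using assms that[of 0] by (simp add: entropy_term_def)
next
  case False
  have "((\<lambda>e. \<bar>b\<bar> * \<bar>e\<bar> + \<bar>C\<bar> * e^2) \<longlongrightarrow> \<bar>b\<bar> * \<bar>0\<bar> + \<bar>C\<bar> * 0^2) (nhds 0)"
    by (intro tendsto_intros filterlim_ident)
  then have "\<forall>\<^sub>F e in nhds 0. \<bar>b\<bar> * \<bar>e\<bar> + \<bar>C\<bar> * e^2 < \<bar>lam\<bar>"
    using False by (intro order_tendstoD) auto
  moreover have "((\<lambda>e. \<bar>e\<bar>) \<longlongrightarrow> \<bar>0\<bar>) (nhds (0::real))"
    by (intro tendsto_intros filterlim_ident)
  then have "\<forall>\<^sub>F e in nhds 0. \<bar>e\<bar> < (1::real)"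
    using order_tendstoD(2)[of abs 0 "nhds (0::real)" "1::real"] by simp
  ultimately have "\<forall>\<^sub>F e in nhds 0. \<bar>b\<bar> * \<bar>e\<bar> + \<bar>C\<bar> * e^2 < \<bar>lam\<bar> \<and> \<bar>e\<bar> < 1"
    by (rule eventually_conj)
  then have "\<forall>\<^sub>F e in nhds 0. \<forall>x. \<bar>x - (lam + e * b)\<bar> \<le> C * e^2 \<and> (lam = 0 \<longrightarrow> x = 0) \<longrightarrow>
      \<bar>entropy_term N x - entropy_term N lam - e * b * entropy_term_deriv N lam\<bar>
        \<le> ((\<bar>b\<bar> + \<bar>C\<bar>)^2 / (\<bar>N\<bar> * ln 2 * \<bar>lam\<bar>) + \<bar>entropy_term_deriv N lam\<bar> * \<bar>C\<bar>) * e^2"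
  proof (rule eventually_mono, intro allI impI)
    fix e x
    assume "\<bar>b\<bar> * \<bar>e\<bar> + \<bar>C\<bar> * e^2 < \<bar>lam\<bar> \<and> \<bar>e\<bar> < 1"
      and "\<bar>x - (lam + e * b)\<bar> \<le> C * e^2 \<and> (lam = 0 \<longrightarrow> x = 0)"
    then show "\<bar>entropy_term N x - entropy_term N lam - e * b * entropy_term_deriv N lam\<bar>
        \<le> ((\<bar>b\<bar> + \<bar>C\<bar>)^2 / (\<bar>N\<bar> * ln 2 * \<bar>lam\<bar>) + \<bar>entropy_term_deriv N lam\<bar> * \<bar>C\<bar>) * e^2"
      using entropy_term_perturbation_bound[OF False] by blast
  qed
  then show ?thesis
    by (rule that)
qed

lemma entropy_sum_perturbation:
  fixes lam b :: "'n::finite \<Rightarrow> real"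
  assumes "\<And>i. lam i = 0 \<Longrightarrow> b i = 0"
  obtains K where "\<forall>\<^sub>F e in nhds 0. \<forall>\<mu>.
      (\<forall>i. \<bar>\<mu> i - (lam i + e * b i)\<bar> \<le> C * e^2 \<and> (lam i = 0 \<longrightarrow> \<mu> i = 0)) \<longrightarrow>
      \<bar>(\<Sum>i\<in>UNIV. entropy_term N (\<mu> i)) - (\<Sum>i\<in>UNIV. entropy_term N (lam i))
        - e * (\<Sum>i\<in>UNIV. b i * entropy_term_deriv N (lam i))\<bar> \<le> K * e^2"
proof -
  define T where "T e x i = entropy_term N x - entropy_term N (lam i) - e * b i * entropy_term_deriv N (lam i)"
    for e x i
  have "\<forall>i. \<exists>K. \<forall>\<^sub>F e in nhds 0. \<forall>x.
      \<bar>x - (lam i + e * b i)\<bar> \<le> C * e^2 \<and> (lam i = 0 \<longrightarrow> x = 0) \<longrightarrow> \<bar>T e x i\<bar> \<le> K * e^2"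
    using entropy_term_perturbation[OF assms] unfolding T_def by blast
  then have "\<exists>K. \<forall>i. \<forall>\<^sub>F e in nhds 0. \<forall>x.
      \<bar>x - (lam i + e * b i)\<bar> \<le> C * e^2 \<and> (lam i = 0 \<longrightarrow> x = 0) \<longrightarrow> \<bar>T e x i\<bar> \<le> K i * e^2"
    by (rule choice)
  then obtain K where "\<forall>i. \<forall>\<^sub>F e in nhds 0. \<forall>x.
      \<bar>x - (lam i + e * b i)\<bar> \<le> C * e^2 \<and> (lam i = 0 \<longrightarrow> x = 0) \<longrightarrow> \<bar>T e x i\<bar> \<le> K i * e^2"
    by blast
  then have "\<forall>\<^sub>F e in nhds 0. \<forall>i x.
      \<bar>x - (lam i + e * b i)\<bar> \<le> C * e^2 \<and> (lam i = 0 \<longrightarrow> x = 0) \<longrightarrow> \<bar>T e x i\<bar> \<le> K i * e^2"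
    by (intro eventually_all_finite) blast
  then have "\<forall>\<^sub>F e in nhds 0. \<forall>\<mu>.
      (\<forall>i. \<bar>\<mu> i - (lam i + e * b i)\<bar> \<le> C * e^2 \<and> (lam i = 0 \<longrightarrow> \<mu> i = 0)) \<longrightarrow>
      \<bar>\<Sum>i\<in>UNIV. T e (\<mu> i) i\<bar> \<le> (\<Sum>i\<in>UNIV. K i) * e^2"
  proof (rule eventually_mono, intro allI impI)
    fix e \<mu>
    assume bound: "\<forall>i x. \<bar>x - (lam i + e * b i)\<bar> \<le> C * e^2 \<and> (lam i = 0 \<longrightarrow> x = 0)
        \<longrightarrow> \<bar>T e x i\<bar> \<le> K i * e^2"
      and \<mu>: "\<forall>i. \<bar>\<mu> i - (lam i + e * b i)\<bar> \<le> C * e^2 \<and> (lam i = 0 \<longrightarrow> \<mu> i = 0)"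
    have "\<bar>\<Sum>i\<in>UNIV. T e (\<mu> i) i\<bar> \<le> (\<Sum>i\<in>UNIV. \<bar>T e (\<mu> i) i\<bar>)"
      by (rule sum_abs)
    also have "\<dots> \<le> (\<Sum>i\<in>UNIV. K i * e^2)"
      using bound \<mu> by (intro sum_mono) blast
    finally show "\<bar>\<Sum>i\<in>UNIV. T e (\<mu> i) i\<bar> \<le> (\<Sum>i\<in>UNIV. K i) * e^2"
      by (simp add: sum_distrib_right)
  qed
  moreover have "(\<Sum>i\<in>UNIV. T e (\<mu> i) i) = (\<Sum>i\<in>UNIV. entropy_term N (\<mu> i))
      - (\<Sum>i\<in>UNIV. entropy_term N (lam i)) - e * (\<Sum>i\<in>UNIV. b i * entropy_term_deriv N (lam i))"
    for e \<mu>
    by (simp add: T_def sum_subtractf sum_distrib_left mult.assoc)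
  ultimately show ?thesis
    using that by simp
qed

lemma quadratic_remainder_imp_has_real_derivative:
  fixes h :: "real \<Rightarrow> real"
  assumes bound: "\<forall>\<^sub>F e in nhds 0. \<bar>h e - (h 0 + e * D)\<bar> \<le> K * e^2"
  shows "(h has_real_derivative D) (at 0)"
    and "(\<lambda>e. h e - (h 0 + e * D)) \<in> O[at 0](\<lambda>e. e^2)"
proof -
  have at: "\<forall>\<^sub>F e in at 0. \<bar>h e - (h 0 + e * D)\<bar> \<le> K * e^2"
    using bound by (simp add: eventually_at_filter eventually_mono)
  then show "(\<lambda>e. h e - (h 0 + e * D)) \<in> O[at 0](\<lambda>e. e^2)"
    by (intro bigoI[where c = K]) (simp add: eventually_mono)
  have "\<forall>\<^sub>F e in at (0::real). e \<noteq> 0"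
    by (simp add: eventually_at_filter)
  with at have "\<forall>\<^sub>F e in at 0. norm ((h e - h 0) / e - D) \<le> K * \<bar>e\<bar>"
  proof eventually_elim
    case (elim e)
    then have "(h e - h 0) / e - D = (h e - (h 0 + e * D)) / e"
      by (simp add: field_simps)
    with elim show ?case
      by (simp add: pos_divide_le_eq mult.assoc power2_eq_square)
  qed
  moreover have "((\<lambda>e. K * \<bar>e\<bar>) \<longlongrightarrow> 0) (at (0::real))"
    by (auto intro!: tendsto_eq_intros)
  ultimately have "((\<lambda>e. (h e - h 0) / e - D) \<longlongrightarrow> 0) (at 0)"
    by (rule Lim_null_comparison)
  then show "(h has_real_derivative D) (at 0)"
    by (simp add: has_field_derivative_iff LIM_zero_cancel)
qed

lemma eigenbasis_common_kernel:
  fixes L B :: "real^'n::finite^'n"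
  assumes "orthonormal_eigenbasis L v lam" and "inj lam" and "lam i = 0"
    and "w \<noteq> 0" and "L *v w = 0" and "B *v w = 0"
  shows "B *v v i = 0"
proof -
  have w: "w = (w \<bullet> v i) *\<^sub>R v i"
    using eigenbasis_eigenvector_parallel[OF assms(1,2)] assms(3,5) by simp
  then have "w \<bullet> v i \<noteq> 0"
    using \<open>w \<noteq> 0\<close> by (metis scale_zero_left)
  moreover have "(w \<bullet> v i) *\<^sub>R (B *v v i) = 0"
    using \<open>B *v w = 0\<close> w by (metis matrix_vector_mult_scaleR)
  ultimately show ?thesis
    by simp
qed

lemma vn_entropy_expansion:
  fixes L B :: "real^'n::finite^'n" and w :: "real^'n" and M :: real
  assumes L: "orthonormal_eigenbasis L v lam" and "inj lam"
    and "transpose L = L" and "transpose B = B"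
    and "w \<noteq> 0" and "L *v w = 0" and "B *v w = 0"
    and simple: "\<forall>\<^sub>F e in nhds 0. card (eigenvalues (L + e *\<^sub>R B)) = CARD('n)"
  defines "h \<equiv> \<lambda>e. vn_entropy M (L + e *\<^sub>R B)"
    and "D \<equiv> - (\<Sum>i\<in>UNIV. (B *v v i) \<bullet> v i * entropy_term_deriv (2 * M) (lam i))"
  shows "(h has_real_derivative D) (at 0) \<and> (\<lambda>e. h e - (h 0 + e * D)) \<in> O[at 0](\<lambda>e. e^2)"
proof -
  define b where "b i = (B *v v i) \<bullet> v i" for i
  have "(L + e *\<^sub>R B) *v w = 0 *\<^sub>R w" for e
    using assms(6,7)
    by (simp add: matrix_vector_mult_add_rdistrib flip: scaleR_matrix_vector_assoc)
  then have "0 \<in> eigenvalues (L + e *\<^sub>R B)" for e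
    unfolding eigenvalues_def using \<open>w \<noteq> 0\<close> by blast
  then have kernel: "b i = 0 \<and> lam i \<in> eigenvalues (L + e *\<^sub>R B)" if "lam i = 0" for i e
    using eigenbasis_common_kernel[OF L \<open>inj lam\<close> that assms(5-7)] that by (simp add: b_def)
  obtain C where spectrum: "\<forall>\<^sub>F e in nhds 0. card (eigenvalues (L + e *\<^sub>R B)) = CARD('n) \<longrightarrow>
      (\<exists>u \<mu>. orthonormal_eigenbasis (L + e *\<^sub>R B) u \<mu> \<and> inj \<mu>
         \<and> (\<forall>i. \<bar>\<mu> i - (lam i + e * b i)\<bar> \<le> C * e^2)
         \<and> (\<forall>i. lam i \<in> eigenvalues (L + e *\<^sub>R B) \<longrightarrow> \<mu> i = lam i))"
    using perturbed_simple_spectrum[OF L \<open>inj lam\<close> assms(3,4)] unfolding b_def .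
  have "lam i = 0 \<Longrightarrow> b i = 0" for i
    using kernel by blast
  then obtain K where entropy: "\<forall>\<^sub>F e in nhds 0. \<forall>\<mu>.
      (\<forall>i. \<bar>\<mu> i - (lam i + e * b i)\<bar> \<le> C * e^2 \<and> (lam i = 0 \<longrightarrow> \<mu> i = 0)) \<longrightarrow>
      \<bar>(\<Sum>i\<in>UNIV. entropy_term (2 * M) (\<mu> i)) - (\<Sum>i\<in>UNIV. entropy_term (2 * M) (lam i))
        - e * (\<Sum>i\<in>UNIV. b i * entropy_term_deriv (2 * M) (lam i))\<bar> \<le> K * e^2"
    by (rule entropy_sum_perturbation)
  have "\<forall>\<^sub>F e in nhds 0. \<bar>h e - (h 0 + e * D)\<bar> \<le> K * e^2"
    using spectrum entropy simple
  proof eventually_elim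
    case (elim e)
    then obtain u \<mu> where S: "orthonormal_eigenbasis (L + e *\<^sub>R B) u \<mu>" "inj \<mu>"
      and "\<forall>i. \<bar>\<mu> i - (lam i + e * b i)\<bar> \<le> C * e^2"
      and "\<forall>i. lam i \<in> eigenvalues (L + e *\<^sub>R B) \<longrightarrow> \<mu> i = lam i"
      by blast
    with kernel have "\<forall>i. \<bar>\<mu> i - (lam i + e * b i)\<bar> \<le> C * e^2 \<and> (lam i = 0 \<longrightarrow> \<mu> i = 0)"
      by metis
    with elim(2) have bound: "\<bar>(\<Sum>i\<in>UNIV. entropy_term (2 * M) (\<mu> i))
        - (\<Sum>i\<in>UNIV. entropy_term (2 * M) (lam i))
        - e * (\<Sum>i\<in>UNIV. b i * entropy_term_deriv (2 * M) (lam i))\<bar> \<le> K * e^2"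
      by blast
    have "h e - (h 0 + e * D) = - ((\<Sum>i\<in>UNIV. entropy_term (2 * M) (\<mu> i))
        - (\<Sum>i\<in>UNIV. entropy_term (2 * M) (lam i))
        - e * (\<Sum>i\<in>UNIV. b i * entropy_term_deriv (2 * M) (lam i)))"
      using vn_entropy_eigenbasis[OF S] vn_entropy_eigenbasis[OF L \<open>inj lam\<close>]
      by (simp add: h_def D_def b_def algebra_simps)
    with bound show ?case
      by (simp only: abs_minus_cancel)
  qed
  then show ?thesis
    using quadratic_remainder_imp_has_real_derivative by blast
qed

theorem corollary3p13:
  fixes A :: "real^'n^'n" and p q :: 'n and s :: real
    and lam :: "'n \<Rightarrow> real" and v :: "'n \<Rightarrow> real^'n"
  assumes adj: "simple_adjacency A"
    and pq: "p \<noteq> q"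
    and sign: "(s = 1 \<and> A$p$q = 0) \<or> (s = -1 \<and> A$p$q = 1)"
    and simple0: "card (eigenvalues (laplacian A)) = CARD('n)"
    and eig: "\<And>i. laplacian A *v v i = lam i *\<^sub>R v i"
    and orth: "\<And>i j. v i \<bullet> v j = (if i = j then 1 else 0)"
    and simple_eps: "\<forall>\<^sub>F \<epsilon> in nhds 0.
          card (eigenvalues (laplacian A + \<epsilon> *\<^sub>R edge_perturbation p q s)) = CARD('n)"
  defines "h \<equiv> (\<lambda>\<epsilon>. vn_entropy (num_edges A) (laplacian A + \<epsilon> *\<^sub>R edge_perturbation p q s))"
    and "D \<equiv> - (1 / (2 * num_edges A)) * (\<Sum>i\<in>UNIV.
          s * ((v i)$p - (v i)$q)^2 * (log 2 (lam i / (2 * num_edges A)) + 1 / ln 2))"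
  shows "(h has_real_derivative D) (at 0)
       \<and> (\<lambda>\<epsilon>. h \<epsilon> - (h 0 + \<epsilon> * D)) \<in> O[at 0](\<lambda>\<epsilon>. \<epsilon>^2)"
proof -
  have V: "orthonormal_eigenbasis (laplacian A) v lam"
    using orth eig by (simp add: orthonormal_eigenbasis_def orthonormal_family_def)
  then have "inj lam"
    using simple0 eigenbasis_eigenvalues[OF V] by (intro eq_card_imp_inj_on) auto
  have "(\<chi> j. 1) \<noteq> (0::real^'n)"
    by (simp add: vec_eq_iff)
  moreover have "D = - (\<Sum>i\<in>UNIV. (edge_perturbation p q s *v v i) \<bullet> v i
      * entropy_term_deriv (2 * num_edges A) (lam i))"
    by (simp add: D_def edge_perturbation_inner[OF pq] entropy_term_deriv_def sum_distrib_left
        sum_negf mult_ac)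
  ultimately show ?thesis
    unfolding h_def
    using vn_entropy_expansion[OF V \<open>inj lam\<close> laplacian_symmetric[OF adj] edge_perturbation_symmetric
        _ laplacian_mult_ones edge_perturbation_mult_ones[OF pq] simple_eps]
    by simp
qed

end
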